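(* Let $n,d\in\mathbb{N}$, and let $\psi_1:\mathbb{R}^d\to\mathbb{C}$ and $\psi_2:\mathbb{R}^n\to\mathbb{C}$ be characteristic exponents of Lévy processes with Lévy triplets $(b_1,Q_1,\nu_1)$ and $(b_2,Q_2,\nu_2)$. Then \[ \{(x,y)\in\mathbb{R}^d\times\mathbb{R}^n\mid\psi_1(x)+\psi_2(y)=0\}=\{(x,y)\in\mathbb{R}^d\times\mathbb{R}^n\mid \psi_1(x)\in i\mathbb{R},\ \psi_2(y)\in i\mathbb{R},\ b_1^x+b_2^y=0\}. \]
   Context: A characteristic exponent with Lévy triplet $(b,Q,\nu)$ on $\mathbb{R}^k$ is $\psi(\xi)=-ib\cdot\xi+\tfrac12\xi\cdot Q\xi+\int_{0<|z|<1}(1-e^{iz\cdot\xi}+iz\cdot\xi)\nu(dz)+\int_{|z|\ge1}(1-e^{iz\cdot\xi})\nu(dz)$. For such a triplet and $x\in\mathbb{R}^k$, define $b^x:=x\cdot b+\int x\cdot z\big(\mathbf 1_{(0,1)}(|x\cdot z|)-\mathbf 1_{(0,1)}(|z|)\big)\nu(dz)$ (the drift of the one-dimensional Lévy process $x\cdot X_t$). Here $b_1^x$ is built from $(b_1,\nu_1)$ and $b_2^y$ from $(b_2,\nu_2)$. *)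

theory Defs
  imports "HOL-Analysis.Analysis"
begin

text \<open>Vectors of R^k are rendered as real^'k (k = CARD('k)); matrices as real^'k^'k.\<close>

definition levy_triplet :: "real^'k \<Rightarrow> real^'k^'k \<Rightarrow> (real^'k) measure \<Rightarrow> bool" where
  "levy_triplet b Q \<nu> \<longleftrightarrow>
     transpose Q = Q \<and> (\<forall>\<xi>. 0 \<le> \<xi> \<bullet> (Q *v \<xi>)) \<and>
     sets \<nu> = sets borel \<and> emeasure \<nu> {0} = 0 \<and>
     (\<integral>\<^sup>+ z. ennreal (min 1 ((norm z)\<^sup>2)) \<partial>\<nu>) < \<infinity>"

definition char_exponent :: "real^'k \<Rightarrow> real^'k^'k \<Rightarrow> (real^'k) measure \<Rightarrow> real^'k \<Rightarrow> complex" where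
  "char_exponent b Q \<nu> \<xi> =
     - \<i> * complex_of_real (b \<bullet> \<xi>) + complex_of_real ((\<xi> \<bullet> (Q *v \<xi>)) / 2)
     + (\<integral> z. indicator {z. 0 < norm z \<and> norm z < 1} z *\<^sub>R
              (1 - cis (z \<bullet> \<xi>) + \<i> * complex_of_real (z \<bullet> \<xi>)) \<partial>\<nu>)
     + (\<integral> z. indicator {z. 1 \<le> norm z} z *\<^sub>R (1 - cis (z \<bullet> \<xi>)) \<partial>\<nu>)"

text \<open>The drift b^x of the one-dimensional Levy process x.X_t;
  1_{(0,1)}(t) is the indicator of the open interval (0,1).\<close>
definition proj_drift :: "real^'k \<Rightarrow> (real^'k) measure \<Rightarrow> real^'k \<Rightarrow> real" where
  "proj_drift b \<nu> x =
     x \<bullet> b + (\<integral> z. (x \<bullet> z) * (indicator {0<..<1} \<bar>x \<bullet> z\<bar> - indicator {0<..<1} (norm z)) \<partial>\<nu>)"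

end

theory Submission
  imports Defs "HOL-Probability.Characteristic_Functions"
begin

text \<open>Taking real parts, \<open>Re \<psi>(\<xi>) = \<xi>\<bullet>Q\<xi>/2 + \<integral>(1 - cos (z\<bullet>\<xi>)) d\<nu>(z)\<close> is nonnegative,
  so \<open>\<psi>\<^sub>1(x) + \<psi>\<^sub>2(y) = 0\<close> forces both real parts to vanish. A vanishing real part
  means \<open>z\<bullet>\<xi> \<in> 2\<pi>\<int>\<close> for \<open>\<nu>\<close>-almost every \<open>z\<close>. Then almost everywhere \<open>sin (z\<bullet>\<xi>) = 0\<close>,
  which kills the oscillating part of \<open>Im \<psi>(\<xi>)\<close>, and \<open>\<bar>z\<bullet>\<xi>\<bar> \<notin> (0,1)\<close>, which reduces the
  correction term in \<open>b\<^sup>\<xi>\<close> to the compensator over \<open>0 < |z| < 1\<close>; hence \<open>\<psi>(\<xi>) = -\<i> b\<^sup>\<xi>\<close>,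
  and the remaining condition is \<open>b\<^sub>1\<^sup>x + b\<^sub>2\<^sup>y = 0\<close>.\<close>

definition small_jump_integrand :: "'a::real_inner \<Rightarrow> 'a \<Rightarrow> complex" where
  "small_jump_integrand \<xi> z = indicator {z. 0 < norm z \<and> norm z < 1} z *\<^sub>R
     (1 - cis (z \<bullet> \<xi>) + \<i> * complex_of_real (z \<bullet> \<xi>))"

definition large_jump_integrand :: "'a::real_inner \<Rightarrow> 'a \<Rightarrow> complex" where
  "large_jump_integrand \<xi> z = indicator {z. 1 \<le> norm z} z *\<^sub>R (1 - cis (z \<bullet> \<xi>))"

lemma char_exponent_altdef:
  "char_exponent b Q \<nu> \<xi> =
     - \<i> * complex_of_real (b \<bullet> \<xi>) + complex_of_real ((\<xi> \<bullet> (Q *v \<xi>)) / 2)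
     + (\<integral>z. small_jump_integrand \<xi> z \<partial>\<nu>) + (\<integral>z. large_jump_integrand \<xi> z \<partial>\<nu>)"
  unfolding char_exponent_def small_jump_integrand_def large_jump_integrand_def ..

lemma norm_small_jump_integrand_le:
  "norm (small_jump_integrand \<xi> z) \<le> (norm \<xi>)\<^sup>2 / 2 * min 1 ((norm z)\<^sup>2)"
proof (cases "0 < norm z \<and> norm z < 1")
  case True
  let ?t = "z \<bullet> \<xi>"
  have "1 - cis ?t + \<i> * ?t = - (iexp ?t - (\<Sum>k \<le> 1. (\<i> * ?t)^k / fact k))"
    by (simp add: cis_conv_exp)
  then have "cmod (1 - cis ?t + \<i> * ?t) = cmod (iexp ?t - (\<Sum>k \<le> 1. (\<i> * ?t)^k / fact k))"
    by (metis norm_minus_cancel)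
  also have "\<dots> \<le> ?t\<^sup>2 / 2"
    using iexp_approx1[of ?t 1] by (simp add: numeral_2_eq_2)
  also have "\<dots> \<le> (norm z * norm \<xi>)\<^sup>2 / 2"
    using power_mono[OF Cauchy_Schwarz_ineq2[of z \<xi>] abs_ge_zero, of 2] by simp
  finally show ?thesis
    using True by (simp add: indicator_def small_jump_integrand_def power_le_one
        power_mult_distrib mult.commute)
qed (simp add: small_jump_integrand_def)

lemma norm_large_jump_integrand_le:
  "norm (large_jump_integrand \<xi> z) \<le> 2 * min 1 ((norm z)\<^sup>2)"
proof (cases "1 \<le> norm z")
  case True
  have "cmod (1 - cis (z \<bullet> \<xi>)) \<le> 2"
    using norm_triangle_ineq4[of 1 "cis (z \<bullet> \<xi>)"] by simp
  then show ?thesis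
    using True by (simp add: large_jump_integrand_def one_le_power)
qed (simp add: large_jump_integrand_def)

lemma levy_triplet_borel_measurable_eq:
  "levy_triplet b Q \<nu> \<Longrightarrow> borel_measurable \<nu> = borel_measurable borel"
  unfolding levy_triplet_def by (intro measurable_cong_sets) auto

lemma levy_triplet_integrable_min_1_norm_sq:
  assumes "levy_triplet b Q \<nu>"
  shows "integrable \<nu> (\<lambda>z. min 1 ((norm z)\<^sup>2))"
proof -
  have "(\<lambda>z. min 1 ((norm z)\<^sup>2)) \<in> borel_measurable \<nu>"
    unfolding levy_triplet_borel_measurable_eq[OF assms] by measurable
  then show ?thesis
    using assms unfolding integrable_iff_bounded levy_triplet_def by simp
qed

lemma
  fixes \<xi> :: "real^'k"
  assumes "levy_triplet b Q \<nu>"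
  shows integrable_small_jump_integrand: "integrable \<nu> (small_jump_integrand \<xi>)"
    and integrable_large_jump_integrand: "integrable \<nu> (large_jump_integrand \<xi>)"
proof -
  have [measurable]: "(\<lambda>z. cis (z \<bullet> \<xi>)) \<in> borel_measurable borel"
    unfolding cis_conv_exp by (intro borel_measurable_continuous_onI continuous_intros)
  have [measurable]: "(\<lambda>z. \<i> * complex_of_real (z \<bullet> \<xi>)) \<in> borel_measurable borel"
    by (intro borel_measurable_continuous_onI continuous_intros)
  note meas = levy_triplet_borel_measurable_eq[OF assms]
  note dom = levy_triplet_integrable_min_1_norm_sq[OF assms]
  show "integrable \<nu> (small_jump_integrand \<xi>)"
  proof (rule Bochner_Integration.integrable_bound)
    show "integrable \<nu> (\<lambda>z. (norm \<xi>)\<^sup>2 / 2 * min 1 ((norm z)\<^sup>2))"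
      using dom by simp
    show "small_jump_integrand \<xi> \<in> borel_measurable \<nu>"
      unfolding meas small_jump_integrand_def by measurable
  qed (use norm_small_jump_integrand_le in auto)
  show "integrable \<nu> (large_jump_integrand \<xi>)"
  proof (rule Bochner_Integration.integrable_bound)
    show "integrable \<nu> (\<lambda>z. 2 * min 1 ((norm z)\<^sup>2))"
      using dom by simp
    show "large_jump_integrand \<xi> \<in> borel_measurable \<nu>"
      unfolding meas large_jump_integrand_def by measurable
  qed (use norm_large_jump_integrand_le in auto)
qed

lemma Re_small_plus_large_jump_integrand:
  "Re (small_jump_integrand \<xi> z) + Re (large_jump_integrand \<xi> z) = 1 - cos (z \<bullet> \<xi>)"
  by (cases "z = 0") (auto simp: small_jump_integrand_def large_jump_integrand_def indicator_def)

lemma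
  fixes \<xi> :: "real^'k"
  assumes "levy_triplet b Q \<nu>"
  shows integrable_one_minus_cos: "integrable \<nu> (\<lambda>z. 1 - cos (z \<bullet> \<xi>))"
    and Re_char_exponent:
      "Re (char_exponent b Q \<nu> \<xi>) = \<xi> \<bullet> (Q *v \<xi>) / 2 + (\<integral>z. 1 - cos (z \<bullet> \<xi>) \<partial>\<nu>)"
proof -
  note small = integrable_small_jump_integrand[OF assms, of \<xi>]
  note large = integrable_large_jump_integrand[OF assms, of \<xi>]
  from Bochner_Integration.integrable_add[OF integrable_Re[OF small] integrable_Re[OF large]]
  show "integrable \<nu> (\<lambda>z. 1 - cos (z \<bullet> \<xi>))"
    by (simp add: Re_small_plus_large_jump_integrand)
  have "Re (char_exponent b Q \<nu> \<xi>) = \<xi> \<bullet> (Q *v \<xi>) / 2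
      + (\<integral>z. Re (small_jump_integrand \<xi> z) \<partial>\<nu>) + (\<integral>z. Re (large_jump_integrand \<xi> z) \<partial>\<nu>)"
    by (simp add: char_exponent_altdef integral_Re[OF small] integral_Re[OF large])
  also have "\<dots> = \<xi> \<bullet> (Q *v \<xi>) / 2
      + (\<integral>z. Re (small_jump_integrand \<xi> z) + Re (large_jump_integrand \<xi> z) \<partial>\<nu>)"
    using Bochner_Integration.integral_add[OF integrable_Re[OF small] integrable_Re[OF large]]
    by simp
  finally show "Re (char_exponent b Q \<nu> \<xi>) = \<xi> \<bullet> (Q *v \<xi>) / 2 + (\<integral>z. 1 - cos (z \<bullet> \<xi>) \<partial>\<nu>)"
    by (simp add: Re_small_plus_large_jump_integrand)
qed

lemma levy_triplet_quadratic_form_nonneg: "levy_triplet b Q \<nu> \<Longrightarrow> 0 \<le> \<xi> \<bullet> (Q *v \<xi>)"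
  unfolding levy_triplet_def by blast

lemma integral_one_minus_cos_nonneg: "0 \<le> (\<integral>z. 1 - cos (z \<bullet> \<xi>) \<partial>\<nu>)"
  by (intro integral_nonneg_AE AE_I2) simp

lemma Re_char_exponent_nonneg: "levy_triplet b Q \<nu> \<Longrightarrow> 0 \<le> Re (char_exponent b Q \<nu> \<xi>)"
  using levy_triplet_quadratic_form_nonneg[of b Q \<nu> \<xi>] integral_one_minus_cos_nonneg[of \<nu> \<xi>]
  by (simp add: Re_char_exponent)

lemma AE_cos_eq_1_if_Re_char_exponent_eq_0:
  assumes "levy_triplet b Q \<nu>" and "Re (char_exponent b Q \<nu> \<xi>) = 0"
  shows "AE z in \<nu>. cos (z \<bullet> \<xi>) = 1"
proof -
  have "(\<integral>z. 1 - cos (z \<bullet> \<xi>) \<partial>\<nu>) = 0"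
    using assms Re_char_exponent[OF assms(1), of \<xi>] levy_triplet_quadratic_form_nonneg[OF assms(1), of \<xi>]
      integral_one_minus_cos_nonneg[of \<nu> \<xi>]
    by linarith
  then show ?thesis
    using integral_nonneg_eq_0_iff_AE[OF integrable_one_minus_cos[OF assms(1)]] by simp
qed

lemma cis_eq_1_if_cos_eq_1: "cos t = 1 \<Longrightarrow> cis t = 1"
  using cos_one_sin_zero[of t] by (simp add: complex_eq_iff)

lemma abs_notin_unit_interval_if_cos_eq_1:
  fixes t :: real
  assumes "cos t = 1"
  shows "\<bar>t\<bar> \<notin> {0<..<1}"
proof
  assume t: "\<bar>t\<bar> \<in> {0<..<1}"
  obtain n :: int where n: "t = real_of_int n * 2 * pi"
    using assms cos_one_2pi_int by blast
  with t have "1 \<le> \<bar>real_of_int n\<bar>"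
    by auto
  then have "1 * (2 * pi) \<le> \<bar>real_of_int n\<bar> * (2 * pi)"
    by (intro mult_right_mono) auto
  also have "\<dots> = \<bar>t\<bar>"
    using n by (simp add: abs_mult)
  finally show False
    using t pi_gt3
    by simp
qed

lemma Im_char_exponent_if_AE_cos_eq_1:
  fixes \<xi> :: "real^'k"
  assumes levy: "levy_triplet b Q \<nu>" and cos_1: "AE z in \<nu>. cos (z \<bullet> \<xi>) = 1"
  shows "Im (char_exponent b Q \<nu> \<xi>) = - proj_drift b \<nu> \<xi>"
proof -
  define S where "S = {z::real^'k. 0 < norm z \<and> norm z < 1}"
  note meas = levy_triplet_borel_measurable_eq[OF levy]
  have small: "(\<integral>z. small_jump_integrand \<xi> z \<partial>\<nu>)
      = (\<integral>z. \<i> * complex_of_real (indicator S z * (z \<bullet> \<xi>)) \<partial>\<nu>)"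
  proof (rule integral_cong_AE)
    show "small_jump_integrand \<xi> \<in> borel_measurable \<nu>"
      using integrable_small_jump_integrand[OF levy] by (rule borel_measurable_integrable)
    show "(\<lambda>z. \<i> * complex_of_real (indicator S z * (z \<bullet> \<xi>))) \<in> borel_measurable \<nu>"
      unfolding meas S_def by measurable
    show "AE z in \<nu>. small_jump_integrand \<xi> z = \<i> * complex_of_real (indicator S z * (z \<bullet> \<xi>))"
      using cos_1 by eventually_elim
        (simp add: small_jump_integrand_def S_def indicator_def cis_eq_1_if_cos_eq_1)
  qed
  have large: "(\<integral>z. large_jump_integrand \<xi> z \<partial>\<nu>) = 0"
    using cos_1 by (intro integral_eq_zero_AE, eventually_elim)
      (simp add: large_jump_integrand_def cis_eq_1_if_cos_eq_1)
  have drift: "(\<integral>z. (\<xi> \<bullet> z) * (indicator {0<..<1} \<bar>\<xi> \<bullet> z\<bar> - indicator {0<..<1} (norm z)) \<partial>\<nu>)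
      = (\<integral>z. - (indicator S z * (z \<bullet> \<xi>)) \<partial>\<nu>)"
  proof (rule integral_cong_AE)
    show "AE z in \<nu>. (\<xi> \<bullet> z) * (indicator {0<..<1} \<bar>\<xi> \<bullet> z\<bar> - indicator {0<..<1} (norm z))
        = - (indicator S z * (z \<bullet> \<xi>))"
      using cos_1 by eventually_elim
        (fastforce dest: abs_notin_unit_interval_if_cos_eq_1 simp: S_def indicator_def inner_commute)
  qed (simp_all add: meas S_def)
  show ?thesis
    unfolding char_exponent_altdef proj_drift_def small large drift
      integral_mult_right_zero integral_minus integral_complex_of_real
    by (simp add: inner_commute)
qed

lemma char_exponent_eq_if_Re_eq_0:
  assumes "levy_triplet b Q \<nu>" and "Re (char_exponent b Q \<nu> \<xi>) = 0"
  shows "char_exponent b Q \<nu> \<xi> = - \<i> * complex_of_real (proj_drift b \<nu> \<xi>)"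
  using assms Im_char_exponent_if_AE_cos_eq_1[OF assms(1) AE_cos_eq_1_if_Re_char_exponent_eq_0[OF assms]]
  by (simp add: complex_eq_iff)

theorem lemma5p3:
  fixes b1 :: "real^'d" and Q1 :: "real^'d^'d" and \<nu>1 :: "(real^'d) measure"
    and b2 :: "real^'n" and Q2 :: "real^'n^'n" and \<nu>2 :: "(real^'n) measure"
  assumes "levy_triplet b1 Q1 \<nu>1" and "levy_triplet b2 Q2 \<nu>2"
  shows "{(x, y). char_exponent b1 Q1 \<nu>1 x + char_exponent b2 Q2 \<nu>2 y = 0}
       = {(x, y). Re (char_exponent b1 Q1 \<nu>1 x) = 0 \<and> Re (char_exponent b2 Q2 \<nu>2 y) = 0
                 \<and> proj_drift b1 \<nu>1 x + proj_drift b2 \<nu>2 y = 0}"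
proof (intro set_eqI iffI; clarsimp)
  fix x y
  assume sum_0: "char_exponent b1 Q1 \<nu>1 x + char_exponent b2 Q2 \<nu>2 y = 0"
  then have "Re (char_exponent b1 Q1 \<nu>1 x) + Re (char_exponent b2 Q2 \<nu>2 y) = 0"
    by (simp add: complex_eq_iff)
  with Re_char_exponent_nonneg[OF assms(1), of x] Re_char_exponent_nonneg[OF assms(2), of y]
  have "Re (char_exponent b1 Q1 \<nu>1 x) = 0" "Re (char_exponent b2 Q2 \<nu>2 y) = 0"
    by linarith+
  with sum_0 show "Re (char_exponent b1 Q1 \<nu>1 x) = 0 \<and> Re (char_exponent b2 Q2 \<nu>2 y) = 0
      \<and> proj_drift b1 \<nu>1 x + proj_drift b2 \<nu>2 y = 0"
    by (simp add: char_exponent_eq_if_Re_eq_0[OF assms(1)] char_exponent_eq_if_Re_eq_0[OF assms(2)]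
        complex_eq_iff)
next
  fix x y
  assume "Re (char_exponent b1 Q1 \<nu>1 x) = 0" "Re (char_exponent b2 Q2 \<nu>2 y) = 0"
    and "proj_drift b1 \<nu>1 x + proj_drift b2 \<nu>2 y = 0"
  then show "char_exponent b1 Q1 \<nu>1 x + char_exponent b2 Q2 \<nu>2 y = 0"
    by (simp add: char_exponent_eq_if_Re_eq_0[OF assms(1)] char_exponent_eq_if_Re_eq_0[OF assms(2)]
        complex_eq_iff)
qed

end
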